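(* Assume that the pair $(\mathcal P,\mathcal P')$ gives $(G,N,\theta)_{\mathcal H}\ge_c(H,M,\varphi)_{\mathcal H}$. Let $U\le\mathbb C^\times$ be the group of roots of unity. If $\epsilon:G_\theta\to U$ is any map that is constant on $N$-cosets and satisfies $\epsilon(1)=1$, then the pair $(\epsilon\mathcal P,\epsilon_{H_\theta}\mathcal P')$ also gives $(G,N,\theta)_{\mathcal H}\ge_c(H,M,\varphi)_{\mathcal H}$, where $(\epsilon\mathcal P)(x)=\epsilon(x)\mathcal P(x)$ and $\epsilon_{H_\theta}$ is the restriction of $\epsilon$ to $H_\theta$.
   Context: All groups are finite; $p$ is a fixed prime. $\mathbb Q^{\mathrm{ab}}\subseteq\mathbb C$ is generated by all roots of unity, $\mathcal G=\mathrm{Gal}(\mathbb Q^{\mathrm{ab}}/\mathbb Q)$, $\mathcal H\le\mathcal G$ consists of those $\sigma$ for which there is an integer $f$ with $\sigma(\xi)=\xi^{p^f}$ for all roots of unity $\xi$ of order prime to $p$. For $N\trianglelefteq G$, $\theta\in\mathrm{Irr}(N)$, $g\in G$, $\sigma\in\mathcal G$: $\theta^{g\sigma}(n)=\sigma(\theta(gng^{-1}))$; $A_\theta$ the stabilizer in $A\le G\times\mathcal G$; $\theta^{\mathcal H}$ the $\mathcal H$-orbit; $G_{\theta^{\mathcal H}}=\{g:\theta^g\in\theta^{\mathcal H}\}$. $(G,N,\theta)_{\mathcal H}$ is an $\mathcal H$-triple if $N\trianglelefteq G$, $\theta\in\mathrm{Irr}(N)$, $G_{\theta^{\mathcal H}}=G$.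 Projective representation $\mathcal P$ with factor set $\alpha$: $\mathcal P(x)\mathcal P(y)=\alpha(x,y)\mathcal P(xy)$. For $G$-invariant $\theta$, $\mathcal P$ is associated with $\theta$ if $\mathcal P_N$ affords $\theta$ and $\mathcal P(ng)=\mathcal P(n)\mathcal P(g)$, $\mathcal P(gn)=\mathcal P(g)\mathcal P(n)$. $\mathcal Q\sim\mu\mathcal P$ means $\mathcal Q(x)=\mu(x)M^{-1}\mathcal P(x)M$ for fixed invertible $M$. For $\mathcal P$ associated with $\theta$ on $G_\theta$ with entries in $\mathbb Q^{\mathrm{ab}}$ and $\theta^{x\sigma}=\theta$: $\mathcal P^{x\sigma}(y)=\sigma(\mathcal P(xyx^{-1}))$, and $\mu_{x\sigma}$ is the unique function $G_\theta\to\mathbb C^\times$, constant on $N$-cosets, $\mu_{x\sigma}(1)=1$, with $\mathcal P^{x\sigma}\sim\mu_{x\sigma}\mathcal P$. For $\mathcal H$-triples with $H\le G$, the pair $(\mathcal P,\mathcal P')$ gives $(G,N,\theta)_{\mathcal H}\ge_c(H,M,\varphi)_{\mathcal H}$ if: (i) $G=NH$, $N\cap H=M$, $\mathbf C_G(N)\subseteq H$; (ii) $(H\times\mathcal H)_\theta=(H\times\mathcal H)_\varphi$; (iii) $\mathcal P$ is a projective representation of $G_\theta$ associated with $\theta$ and $\mathcal P'$ one of $H_\varphi$ associated with $\varphi$, entries in $\mathbb Q^{\mathrm{ab}}$, factor sets with root-of-unity values agreeing on $H_\theta\times H_\theta$, and $\mathcal P(c),\mathcal P'(c)$ the same scalar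 for all $c\in\mathbf C_G(N)$; (iv) $\mu_a=\mu'_a$ on $H_\theta$ for all $a\in(H\times\mathcal H)_\theta$ (with $\mu_a$, $\mu'_a$ computed from $\mathcal P$, $\mathcal P'$). *)

theory Defs
  imports "HOL-Algebra.Coset" "Jordan_Normal_Form.Matrix" "HOL-Computational_Algebra.Primes"
begin

definition roots_of_unity :: "complex set" where
  "roots_of_unity = {z. \<exists>n::nat. n > 0 \<and> z ^ n = 1}"

definition is_subfield_C :: "complex set \<Rightarrow> bool" where
  "is_subfield_C F \<longleftrightarrow> 0 \<in> F \<and> 1 \<in> F \<and>
     (\<forall>x\<in>F. \<forall>y\<in>F. x + y \<in> F \<and> x * y \<in> F) \<and>
     (\<forall>x\<in>F. - x \<in> F \<and> inverse x \<in> F)"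

definition Qab :: "complex set" where
  "Qab = \<Inter> {F. is_subfield_C F \<and> roots_of_unity \<subseteq> F}"

text \<open>Gal(Q^ab/Q): field automorphisms of Q^ab; each is represented by the
  unique function on C which is the identity outside Q^ab.\<close>
definition Gal_Qab :: "(complex \<Rightarrow> complex) set" where
  "Gal_Qab = {\<sigma>. bij_betw \<sigma> Qab Qab \<and>
      (\<forall>x\<in>Qab. \<forall>y\<in>Qab. \<sigma> (x + y) = \<sigma> x + \<sigma> y \<and> \<sigma> (x * y) = \<sigma> x * \<sigma> y) \<and>
      (\<forall>x. x \<notin> Qab \<longrightarrow> \<sigma> x = x)}"

definition roots_of_unity_p' :: "nat \<Rightarrow> complex set" where
  "roots_of_unity_p' p = {z. \<exists>m::nat. m > 0 \<and> coprime m p \<and> z ^ m = 1}"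

text \<open>The subgroup \<H>: there is an integer f with sigma(xi) = xi^(p^f) for all
  roots of unity xi of order prime to p.  For f = -k < 0 this means that
  sigma is inverse to xi |-> xi^(p^k), i.e. sigma(xi)^(p^k) = xi.\<close>
definition Hcal :: "nat \<Rightarrow> (complex \<Rightarrow> complex) set" where
  "Hcal p = {\<sigma> \<in> Gal_Qab. \<exists>f::nat.
      (\<forall>\<xi> \<in> roots_of_unity_p' p. \<sigma> \<xi> = \<xi> ^ (p ^ f)) \<or>
      (\<forall>\<xi> \<in> roots_of_unity_p' p. (\<sigma> \<xi>) ^ (p ^ f) = \<xi>)}"

definition mat_trace :: "complex mat \<Rightarrow> complex" where
  "mat_trace A = (\<Sum>i<dim_row A. A $$ (i, i))"

definition is_rep :: "('g, 'b) monoid_scheme \<Rightarrow> 'g set \<Rightarrow> nat \<Rightarrow> ('g \<Rightarrow> complex mat) \<Rightarrow> bool" where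
  "is_rep G N d \<rho> \<longleftrightarrow> (\<forall>n\<in>N. \<rho> n \<in> carrier_mat d d) \<and> \<rho> \<one>\<^bsub>G\<^esub> = 1\<^sub>m d \<and>
     (\<forall>x\<in>N. \<forall>y\<in>N. \<rho> (x \<otimes>\<^bsub>G\<^esub> y) = \<rho> x * \<rho> y)"

definition irreducible_rep :: "('g, 'b) monoid_scheme \<Rightarrow> 'g set \<Rightarrow> nat \<Rightarrow> ('g \<Rightarrow> complex mat) \<Rightarrow> bool" where
  "irreducible_rep G N d \<rho> \<longleftrightarrow> d > 0 \<and>
     \<not> (\<exists>W. W \<subseteq> carrier_vec d \<and> 0\<^sub>v d \<in> W \<and>
            (\<forall>v\<in>W. \<forall>w\<in>W. v + w \<in> W) \<and> (\<forall>c::complex. \<forall>v\<in>W. c \<cdot>\<^sub>v v \<in> W) \<and>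
            W \<noteq> {0\<^sub>v d} \<and> W \<noteq> carrier_vec d \<and>
            (\<forall>n\<in>N. \<forall>w\<in>W. \<rho> n *\<^sub>v w \<in> W))"

definition irr_char :: "('g, 'b) monoid_scheme \<Rightarrow> 'g set \<Rightarrow> ('g \<Rightarrow> complex) \<Rightarrow> bool" where
  "irr_char G N \<theta> \<longleftrightarrow> (\<exists>d \<rho>. is_rep G N d \<rho> \<and> irreducible_rep G N d \<rho> \<and>
       (\<forall>n\<in>N. \<theta> n = mat_trace (\<rho> n)))"

text \<open>Stabilizer A_theta for A a subset of G x \<G> (here A = K x S).  theta^{g sigma}(n) = sigma(theta(g n g^-1)).\<close>
definition stab_pairs :: "('g, 'b) monoid_scheme \<Rightarrow> 'g set \<Rightarrow> (complex \<Rightarrow> complex) set \<Rightarrow> 'g set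
     \<Rightarrow> ('g \<Rightarrow> complex) \<Rightarrow> ('g \<times> (complex \<Rightarrow> complex)) set" where
  "stab_pairs G K S N \<theta> = {(g, \<sigma>). g \<in> K \<and> \<sigma> \<in> S \<and>
      (\<forall>n\<in>N. \<sigma> (\<theta> (g \<otimes>\<^bsub>G\<^esub> n \<otimes>\<^bsub>G\<^esub> inv\<^bsub>G\<^esub> g)) = \<theta> n)}"

definition stab :: "('g, 'b) monoid_scheme \<Rightarrow> 'g set \<Rightarrow> 'g set \<Rightarrow> ('g \<Rightarrow> complex) \<Rightarrow> 'g set" where
  "stab G K N \<theta> = {g \<in> K. \<forall>n\<in>N. \<theta> (g \<otimes>\<^bsub>G\<^esub> n \<otimes>\<^bsub>G\<^esub> inv\<^bsub>G\<^esub> g) = \<theta> n}"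

text \<open>(K,N,theta)_\<H> is an \<H>-triple (all inside the ambient group G):
  N normal in K, theta in Irr(N), K_{theta^\<H>} = K.\<close>
definition H_triple :: "('g, 'b) monoid_scheme \<Rightarrow> nat \<Rightarrow> 'g set \<Rightarrow> 'g set \<Rightarrow> ('g \<Rightarrow> complex) \<Rightarrow> bool" where
  "H_triple G p K N \<theta> \<longleftrightarrow> subgroup K G \<and> subgroup N G \<and> N \<subseteq> K \<and>
     (\<forall>k\<in>K. \<forall>n\<in>N. k \<otimes>\<^bsub>G\<^esub> n \<otimes>\<^bsub>G\<^esub> inv\<^bsub>G\<^esub> k \<in> N) \<and>
     irr_char G N \<theta> \<and>
     (\<forall>g\<in>K. \<exists>\<sigma>\<in>Hcal p. \<forall>n\<in>N. \<theta> (g \<otimes>\<^bsub>G\<^esub> n \<otimes>\<^bsub>G\<^esub> inv\<^bsub>G\<^esub> g) = \<sigma> (\<theta> n))"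

definition centralizer_of :: "('g, 'b) monoid_scheme \<Rightarrow> 'g set \<Rightarrow> 'g set" where
  "centralizer_of G N = {g \<in> carrier G. \<forall>n\<in>N. g \<otimes>\<^bsub>G\<^esub> n = n \<otimes>\<^bsub>G\<^esub> g}"

definition proj_rep :: "('g, 'b) monoid_scheme \<Rightarrow> 'g set \<Rightarrow> nat \<Rightarrow> ('g \<Rightarrow> complex mat)
     \<Rightarrow> ('g \<Rightarrow> 'g \<Rightarrow> complex) \<Rightarrow> bool" where
  "proj_rep G S d P \<alpha> \<longleftrightarrow> (\<forall>x\<in>S. P x \<in> carrier_mat d d \<and> invertible_mat (P x)) \<and>
     (\<forall>x\<in>S. \<forall>y\<in>S. \<alpha> x y \<noteq> 0 \<and> P x * P y = \<alpha> x y \<cdot>\<^sub>m P (x \<otimes>\<^bsub>G\<^esub> y))"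

definition assoc_with :: "('g, 'b) monoid_scheme \<Rightarrow> 'g set \<Rightarrow> 'g set \<Rightarrow> ('g \<Rightarrow> complex)
     \<Rightarrow> nat \<Rightarrow> ('g \<Rightarrow> complex mat) \<Rightarrow> bool" where
  "assoc_with G S N \<theta> d P \<longleftrightarrow> is_rep G N d P \<and> (\<forall>n\<in>N. mat_trace (P n) = \<theta> n) \<and>
     (\<forall>n\<in>N. \<forall>g\<in>S. P (n \<otimes>\<^bsub>G\<^esub> g) = P n * P g \<and> P (g \<otimes>\<^bsub>G\<^esub> n) = P g * P n)"

definition entries_in_Qab :: "'g set \<Rightarrow> ('g \<Rightarrow> complex mat) \<Rightarrow> bool" where
  "entries_in_Qab S P \<longleftrightarrow>
     (\<forall>x\<in>S. \<forall>i<dim_row (P x). \<forall>j<dim_col (P x). P x $$ (i, j) \<in> Qab)"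

text \<open>mu satisfies the defining property of mu_{x sigma} for P on S (over N):
  mu : S -> C^x, constant on N-cosets, mu(1) = 1, and P^{x sigma} ~ mu P, where
  P^{x sigma}(y) = sigma(P(x y x^-1)) entrywise.\<close>
definition is_mu :: "('g, 'b) monoid_scheme \<Rightarrow> 'g set \<Rightarrow> 'g set \<Rightarrow> ('g \<Rightarrow> complex mat)
     \<Rightarrow> 'g \<Rightarrow> (complex \<Rightarrow> complex) \<Rightarrow> ('g \<Rightarrow> complex) \<Rightarrow> bool" where
  "is_mu G S N P x \<sigma> \<mu> \<longleftrightarrow>
     (let d = dim_row (P \<one>\<^bsub>G\<^esub>) in
       (\<forall>y\<in>S. \<mu> y \<noteq> 0) \<and> \<mu> \<one>\<^bsub>G\<^esub> = 1 \<and>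
       (\<forall>y\<in>S. \<forall>n\<in>N. \<mu> (n \<otimes>\<^bsub>G\<^esub> y) = \<mu> y) \<and>
       (\<exists>A Ai. A \<in> carrier_mat d d \<and> Ai \<in> carrier_mat d d \<and> A * Ai = 1\<^sub>m d \<and> Ai * A = 1\<^sub>m d \<and>
          (\<forall>y\<in>S. map_mat \<sigma> (P (x \<otimes>\<^bsub>G\<^esub> y \<otimes>\<^bsub>G\<^esub> inv\<^bsub>G\<^esub> x)) = \<mu> y \<cdot>\<^sub>m (Ai * P y * A))))"

definition ge_c :: "('g, 'b) monoid_scheme \<Rightarrow> nat \<Rightarrow> 'g set \<Rightarrow> ('g \<Rightarrow> complex)
     \<Rightarrow> 'g set \<Rightarrow> 'g set \<Rightarrow> ('g \<Rightarrow> complex) \<Rightarrow> ('g \<Rightarrow> complex mat) \<Rightarrow> ('g \<Rightarrow> complex mat) \<Rightarrow> bool" where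
  "ge_c G p N \<theta> H M \<phi> P P' \<longleftrightarrow>
     H_triple G p (carrier G) N \<theta> \<and> H_triple G p H M \<phi> \<and> subgroup H G \<and>
     \<comment> \<open>(i)\<close>
     carrier G = N <#>\<^bsub>G\<^esub> H \<and> N \<inter> H = M \<and> centralizer_of G N \<subseteq> H \<and>
     \<comment> \<open>(ii)\<close>
     stab_pairs G H (Hcal p) N \<theta> = stab_pairs G H (Hcal p) M \<phi> \<and>
     \<comment> \<open>(iii)\<close>
     (\<exists>d d' \<alpha> \<alpha>'.
        proj_rep G (stab G (carrier G) N \<theta>) d P \<alpha> \<and> assoc_with G (stab G (carrier G) N \<theta>) N \<theta> d P \<and>
        proj_rep G (stab G H M \<phi>) d' P' \<alpha>' \<and> assoc_with G (stab G H M \<phi>) M \<phi> d' P' \<and>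
        entries_in_Qab (stab G (carrier G) N \<theta>) P \<and> entries_in_Qab (stab G H M \<phi>) P' \<and>
        (\<forall>x\<in>stab G (carrier G) N \<theta>. \<forall>y\<in>stab G (carrier G) N \<theta>. \<alpha> x y \<in> roots_of_unity) \<and>
        (\<forall>x\<in>stab G H M \<phi>. \<forall>y\<in>stab G H M \<phi>. \<alpha>' x y \<in> roots_of_unity) \<and>
        (\<forall>x\<in>stab G H N \<theta>. \<forall>y\<in>stab G H N \<theta>. \<alpha> x y = \<alpha>' x y) \<and>
        (\<forall>c\<in>centralizer_of G N. \<exists>s. P c = s \<cdot>\<^sub>m 1\<^sub>m d \<and> P' c = s \<cdot>\<^sub>m 1\<^sub>m d')) \<and>
     \<comment> \<open>(iv)\<close>
     (\<forall>x \<sigma>. (x, \<sigma>) \<in> stab_pairs G H (Hcal p) N \<theta> \<longrightarrow>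
        (\<exists>\<mu> \<mu>'. is_mu G (stab G (carrier G) N \<theta>) N P x \<sigma> \<mu> \<and> is_mu G (stab G H M \<phi>) M P' x \<sigma> \<mu>') \<and>
        (\<forall>\<mu> \<mu>'. is_mu G (stab G (carrier G) N \<theta>) N P x \<sigma> \<mu> \<longrightarrow> is_mu G (stab G H M \<phi>) M P' x \<sigma> \<mu>' \<longrightarrow>
           (\<forall>y\<in>stab G H N \<theta>. \<mu> y = \<mu>' y)))"

end

theory Submission
  imports Defs
begin

(* Multiplying P by \<epsilon> multiplies its factor set by the coboundary
   (x, y) \<mapsto> \<epsilon> x \<epsilon> y / \<epsilon> (x y), whose values are roots of unity, and multiplies
   \<mu>_{x\<sigma>} by y \<mapsto> \<sigma> (\<epsilon> (x y x\<inverse>)) / \<epsilon> y.  Both corrections depend on \<epsilon> alone,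
   so they agree for P and for P' on H_\<theta>, and conditions (iii) and (iv) survive.
   Since N is normal, \<epsilon> is trivial on N and constant on left and right N-cosets,
   so \<epsilon> P is still associated with \<theta>. *)

lemma smult_smult_mat: "a \<cdot>\<^sub>m (b \<cdot>\<^sub>m A) = (a * b) \<cdot>\<^sub>m (A :: 'a :: semigroup_mult mat)"
  by (rule eq_matI) (auto simp: mult.assoc)

lemma one_smult_mat [simp]: "(1 :: 'a :: monoid_mult) \<cdot>\<^sub>m A = A"
  by (rule eq_matI) auto

lemma smult_mult_smult_mat:
  assumes "A \<in> carrier_mat nr n" and "B \<in> carrier_mat n nc"
  shows "(a \<cdot>\<^sub>m A) * (b \<cdot>\<^sub>m B) = (a * b :: 'a :: comm_semiring_0) \<cdot>\<^sub>m (A * B)"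
proof -
  have "(a \<cdot>\<^sub>m A) * (b \<cdot>\<^sub>m B) = b \<cdot>\<^sub>m ((a \<cdot>\<^sub>m A) * B)"
    using assms by (intro mult_smult_distrib) auto
  also have "\<dots> = b \<cdot>\<^sub>m (a \<cdot>\<^sub>m (A * B))"
    using assms by (simp add: mult_smult_assoc_mat)
  finally show ?thesis by (simp add: smult_smult_mat mult.commute)
qed

lemma invertible_mat_smult:
  fixes A :: "'a :: field mat"
  assumes "invertible_mat A" and "k \<noteq> 0"
  shows "invertible_mat (k \<cdot>\<^sub>m A)"
proof -
  from assms(1) obtain B where AB: "inverts_mat A B" and BA: "inverts_mat B A" and sq: "square_mat A"
    unfolding invertible_mat_def by blast
  define n where "n = dim_row A"
  have A: "A \<in> carrier_mat n n" using sq n_def by auto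
  have "dim_col (A * B) = dim_col (1\<^sub>m n)" and "dim_col (B * A) = dim_col (1\<^sub>m (dim_row B))"
    using AB BA unfolding inverts_mat_def n_def by simp_all
  then have B: "B \<in> carrier_mat n n" using A by auto
  have "inverts_mat (k \<cdot>\<^sub>m A) (inverse k \<cdot>\<^sub>m B)" and "inverts_mat (inverse k \<cdot>\<^sub>m B) (k \<cdot>\<^sub>m A)"
    using AB BA assms(2) unfolding inverts_mat_def
    by (simp_all add: smult_mult_smult_mat[OF A B] smult_mult_smult_mat[OF B A])
  then show ?thesis using sq unfolding invertible_mat_def by auto
qed

lemma roots_of_unity_subset_Qab: "roots_of_unity \<subseteq> Qab"
  unfolding Qab_def by auto

lemma zero_in_Qab: "0 \<in> Qab"
  unfolding Qab_def is_subfield_C_def by auto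

lemma one_in_Qab: "1 \<in> Qab"
  unfolding Qab_def is_subfield_C_def by auto

lemma Qab_mult: "x \<in> Qab \<Longrightarrow> y \<in> Qab \<Longrightarrow> x * y \<in> Qab"
  unfolding Qab_def is_subfield_C_def by auto

lemma Qab_inverse: "x \<in> Qab \<Longrightarrow> inverse x \<in> Qab"
  unfolding Qab_def is_subfield_C_def by auto

lemma roots_of_unity_nonzero: "z \<in> roots_of_unity \<Longrightarrow> z \<noteq> 0"
  unfolding roots_of_unity_def by (auto simp: zero_power)

lemma roots_of_unity_mult:
  assumes "z \<in> roots_of_unity" and "w \<in> roots_of_unity"
  shows "z * w \<in> roots_of_unity"
proof -
  obtain n m :: nat where "n > 0" "z ^ n = 1" "m > 0" "w ^ m = 1"
    using assms unfolding roots_of_unity_def by auto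
  have "(z * w) ^ (n * m) = (z ^ n) ^ m * (w ^ m) ^ n"
    by (simp add: power_mult_distrib power_mult[symmetric] mult.commute)
  then have "(z * w) ^ (n * m) = 1" and "n * m > 0"
    using \<open>n > 0\<close> \<open>z ^ n = 1\<close> \<open>m > 0\<close> \<open>w ^ m = 1\<close> by simp_all
  then show ?thesis unfolding roots_of_unity_def by blast
qed

lemma roots_of_unity_inverse:
  assumes "z \<in> roots_of_unity"
  shows "inverse z \<in> roots_of_unity"
  using assms unfolding roots_of_unity_def by (auto simp: power_inverse)

lemma Gal_Qab_inj:
  assumes "\<sigma> \<in> Gal_Qab"
  shows "inj \<sigma>"
proof (rule injI)
  fix a b assume "\<sigma> a = \<sigma> b"
  moreover have "inj_on \<sigma> Qab" "\<sigma> ` Qab = Qab" "\<forall>x. x \<notin> Qab \<longrightarrow> \<sigma> x = x"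
    using assms unfolding Gal_Qab_def bij_betw_def by auto
  ultimately show "a = b"
    unfolding inj_on_def by (cases "a \<in> Qab"; cases "b \<in> Qab") force+
qed

lemma Gal_Qab_mult: "\<sigma> \<in> Gal_Qab \<Longrightarrow> x \<in> Qab \<Longrightarrow> y \<in> Qab \<Longrightarrow> \<sigma> (x * y) = \<sigma> x * \<sigma> y"
  unfolding Gal_Qab_def by auto

lemma Gal_Qab_zero:
  assumes "\<sigma> \<in> Gal_Qab"
  shows "\<sigma> 0 = 0"
proof -
  have "\<sigma> (0 + 0) = \<sigma> 0 + \<sigma> 0" using assms zero_in_Qab unfolding Gal_Qab_def by blast
  then show ?thesis by simp
qed

lemma Gal_Qab_nonzero: "\<sigma> \<in> Gal_Qab \<Longrightarrow> x \<noteq> 0 \<Longrightarrow> \<sigma> x \<noteq> 0"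
  by (metis Gal_Qab_inj Gal_Qab_zero injD)

lemma Gal_Qab_one:
  assumes "\<sigma> \<in> Gal_Qab"
  shows "\<sigma> 1 = 1"
proof -
  have "\<sigma> 1 = \<sigma> 1 * \<sigma> 1" using Gal_Qab_mult[OF assms one_in_Qab one_in_Qab] by simp
  then show ?thesis using Gal_Qab_nonzero[OF assms] by (metis mult_cancel_left2 one_neq_zero)
qed

lemma map_mat_Gal_Qab_smult:
  assumes "\<sigma> \<in> Gal_Qab" and "a \<in> Qab" and "\<forall>i<dim_row A. \<forall>j<dim_col A. A $$ (i, j) \<in> Qab"
  shows "map_mat \<sigma> (a \<cdot>\<^sub>m A) = \<sigma> a \<cdot>\<^sub>m map_mat \<sigma> A"
  by (rule eq_matI) (use assms in \<open>auto simp: Gal_Qab_mult\<close>)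

lemma id_in_Hcal: "id \<in> Hcal p"
proof -
  have "id \<in> Gal_Qab" unfolding Gal_Qab_def by (simp add: bij_betw_id)
  then show ?thesis unfolding Hcal_def by (intro CollectI conjI exI[of _ 0]) simp_all
qed

context group
begin

lemma inv_cancel_left [simp]:
  "x \<in> carrier G \<Longrightarrow> y \<in> carrier G \<Longrightarrow> x \<otimes> (inv x \<otimes> y) = y"
  "x \<in> carrier G \<Longrightarrow> y \<in> carrier G \<Longrightarrow> inv x \<otimes> (x \<otimes> y) = y"
  by (simp_all add: m_assoc[symmetric])

lemma one_in_stab: "subgroup K G \<Longrightarrow> N \<subseteq> carrier G \<Longrightarrow> \<one> \<in> stab G K N \<theta>"
  unfolding stab_def by (auto simp: subgroup.one_closed)

lemma stab_mult_closed:
  assumes K: "subgroup K G" and N: "N \<subseteq> carrier G"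
    and normal: "\<forall>k\<in>K. \<forall>n\<in>N. k \<otimes> n \<otimes> inv k \<in> N"
    and x: "x \<in> stab G K N \<theta>" and y: "y \<in> stab G K N \<theta>"
  shows "x \<otimes> y \<in> stab G K N \<theta>"
proof -
  have xK: "x \<in> K" and yK: "y \<in> K" and x_fix: "\<forall>n\<in>N. \<theta> (x \<otimes> n \<otimes> inv x) = \<theta> n"
    and y_fix: "\<forall>n\<in>N. \<theta> (y \<otimes> n \<otimes> inv y) = \<theta> n" using x y unfolding stab_def by auto
  have xG: "x \<in> carrier G" and yG: "y \<in> carrier G" using xK yK subgroup.subset[OF K] by auto
  have "\<theta> (x \<otimes> y \<otimes> n \<otimes> inv (x \<otimes> y)) = \<theta> n" if n: "n \<in> N" for n
  proof -
    have "x \<otimes> y \<otimes> n \<otimes> inv (x \<otimes> y) = x \<otimes> (y \<otimes> n \<otimes> inv y) \<otimes> inv x"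
      using xG yG n N by (auto simp: m_assoc inv_mult_group)
    moreover have "y \<otimes> n \<otimes> inv y \<in> N" using normal yK n by blast
    ultimately show ?thesis using x_fix y_fix n by simp
  qed
  then show ?thesis using subgroup.m_closed[OF K xK yK] unfolding stab_def by blast
qed

lemma stab_conj_closed:
  assumes K: "subgroup K G" and N: "N \<subseteq> carrier G"
    and normal: "\<forall>k\<in>K. \<forall>n\<in>N. k \<otimes> n \<otimes> inv k \<in> N"
    and xK: "x \<in> K" and \<sigma>: "inj \<sigma>" and x_fix: "\<forall>n\<in>N. \<sigma> (\<theta> (x \<otimes> n \<otimes> inv x)) = \<theta> n"
    and y: "y \<in> stab G K N \<theta>"
  shows "x \<otimes> y \<otimes> inv x \<in> stab G K N \<theta>"
proof -
  have yK: "y \<in> K" and y_fix: "\<forall>n\<in>N. \<theta> (y \<otimes> n \<otimes> inv y) = \<theta> n" using y unfolding stab_def by auto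
  have xG: "x \<in> carrier G" and yG: "y \<in> carrier G" using xK yK subgroup.subset[OF K] by auto
  have inv_xK: "inv x \<in> K" using subgroup.m_inv_closed[OF K xK] .
  have "\<theta> (x \<otimes> y \<otimes> inv x \<otimes> n \<otimes> inv (x \<otimes> y \<otimes> inv x)) = \<theta> n" if n: "n \<in> N" for n
  proof -
    have nG: "n \<in> carrier G" using N n by blast
    define n' where "n' = inv x \<otimes> n \<otimes> x"
    have n': "n' \<in> N" using normal inv_xK n xG unfolding n'_def by (metis inv_inv)
    have "y \<otimes> n' \<otimes> inv y \<in> N" using normal yK n' by blast
    moreover have "x \<otimes> y \<otimes> inv x \<otimes> n \<otimes> inv (x \<otimes> y \<otimes> inv x) = x \<otimes> (y \<otimes> n' \<otimes> inv y) \<otimes> inv x"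
      and "x \<otimes> n' \<otimes> inv x = n"
      using xG yG nG unfolding n'_def by (simp_all add: m_assoc inv_mult_group)
    ultimately have "\<sigma> (\<theta> (x \<otimes> y \<otimes> inv x \<otimes> n \<otimes> inv (x \<otimes> y \<otimes> inv x))) = \<sigma> (\<theta> n)"
      using x_fix y_fix n' by (metis (no_types, lifting))
    then show ?thesis using \<sigma> by (simp add: inj_eq)
  qed
  moreover have "x \<otimes> y \<otimes> inv x \<in> K" by (simp add: K inv_xK subgroup.m_closed xK yK)
  ultimately show ?thesis unfolding stab_def by blast
qed

end

lemma proj_rep_smult:
  assumes "proj_rep G S d P \<alpha>" and "\<forall>x\<in>S. c x \<noteq> 0" and "\<forall>x\<in>S. \<forall>y\<in>S. x \<otimes>\<^bsub>G\<^esub> y \<in> S"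
  shows "proj_rep G S d (\<lambda>x. c x \<cdot>\<^sub>m P x) (\<lambda>x y. c x * c y / c (x \<otimes>\<^bsub>G\<^esub> y) * \<alpha> x y)"
  unfolding proj_rep_def
proof (intro conjI ballI)
  fix x assume "x \<in> S"
  then show "c x \<cdot>\<^sub>m P x \<in> carrier_mat d d" and "invertible_mat (c x \<cdot>\<^sub>m P x)"
    using assms(1,2) unfolding proj_rep_def by (auto intro: invertible_mat_smult)
next
  fix x y assume x: "x \<in> S" and y: "y \<in> S"
  have xy: "x \<otimes>\<^bsub>G\<^esub> y \<in> S" using assms(3) x y by blast
  have "\<alpha> x y \<noteq> 0" and "P x * P y = \<alpha> x y \<cdot>\<^sub>m P (x \<otimes>\<^bsub>G\<^esub> y)"
    and "P x \<in> carrier_mat d d" and "P y \<in> carrier_mat d d"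
    using assms(1) x y unfolding proj_rep_def by auto
  then show "c x * c y / c (x \<otimes>\<^bsub>G\<^esub> y) * \<alpha> x y \<noteq> 0"
    and "(c x \<cdot>\<^sub>m P x) * (c y \<cdot>\<^sub>m P y)
      = (c x * c y / c (x \<otimes>\<^bsub>G\<^esub> y) * \<alpha> x y) \<cdot>\<^sub>m (c (x \<otimes>\<^bsub>G\<^esub> y) \<cdot>\<^sub>m P (x \<otimes>\<^bsub>G\<^esub> y))"
    using assms(2) x y xy by (simp_all add: smult_mult_smult_mat smult_smult_mat)
qed

lemma assoc_with_smult:
  assumes "assoc_with G S N \<theta> d P" and "\<forall>g\<in>S. P g \<in> carrier_mat d d"
    and "\<forall>x\<in>N. \<forall>y\<in>N. x \<otimes>\<^bsub>G\<^esub> y \<in> N" and "\<forall>n\<in>N. c n = 1" and "c \<one>\<^bsub>G\<^esub> = 1"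
    and "\<forall>n\<in>N. \<forall>g\<in>S. c (n \<otimes>\<^bsub>G\<^esub> g) = c g \<and> c (g \<otimes>\<^bsub>G\<^esub> n) = c g"
  shows "assoc_with G S N \<theta> d (\<lambda>x. c x \<cdot>\<^sub>m P x)"
proof -
  have rep: "is_rep G N d P" and tr: "\<forall>n\<in>N. mat_trace (P n) = \<theta> n"
    and split: "\<forall>n\<in>N. \<forall>g\<in>S. P (n \<otimes>\<^bsub>G\<^esub> g) = P n * P g \<and> P (g \<otimes>\<^bsub>G\<^esub> n) = P g * P n"
    using assms(1) unfolding assoc_with_def by auto
  have "is_rep G N d (\<lambda>x. c x \<cdot>\<^sub>m P x)"
    using rep assms(3-5) unfolding is_rep_def by simp
  moreover have "\<forall>n\<in>N. mat_trace (c n \<cdot>\<^sub>m P n) = \<theta> n" using tr assms(4) by simp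
  moreover have "c (n \<otimes>\<^bsub>G\<^esub> g) \<cdot>\<^sub>m P (n \<otimes>\<^bsub>G\<^esub> g) = (c n \<cdot>\<^sub>m P n) * (c g \<cdot>\<^sub>m P g) \<and>
      c (g \<otimes>\<^bsub>G\<^esub> n) \<cdot>\<^sub>m P (g \<otimes>\<^bsub>G\<^esub> n) = (c g \<cdot>\<^sub>m P g) * (c n \<cdot>\<^sub>m P n)" if "n \<in> N" "g \<in> S" for n g
  proof -
    have "P n \<in> carrier_mat d d" and "P g \<in> carrier_mat d d"
      using rep assms(2) that unfolding is_rep_def by auto
    then show ?thesis
      using split assms(4,6) that by (simp add: mult_smult_distrib mult_smult_assoc_mat)
  qed
  ultimately show ?thesis unfolding assoc_with_def by blast
qed

lemma entries_in_Qab_smult: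
  "entries_in_Qab S P \<Longrightarrow> \<forall>x\<in>S. c x \<in> Qab \<Longrightarrow> entries_in_Qab S (\<lambda>x. c x \<cdot>\<^sub>m P x)"
  unfolding entries_in_Qab_def by (auto intro: Qab_mult)

lemma (in group) is_mu_cong:
  assumes "\<one> \<in> S" and "\<forall>y\<in>S. x \<otimes> y \<otimes> inv x \<in> S" and "\<forall>y\<in>S. P y = Q y"
  shows "is_mu G S N P x \<sigma> \<mu> \<longleftrightarrow> is_mu G S N Q x \<sigma> \<mu>"
  using assms unfolding is_mu_def Let_def by simp

lemma (in group) is_mu_smult:
  assumes \<sigma>: "\<sigma> \<in> Gal_Qab" and x: "x \<in> carrier G"
    and S: "S \<subseteq> carrier G" "\<one> \<in> S" "\<forall>y\<in>S. x \<otimes> y \<otimes> inv x \<in> S"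
    and N: "N \<subseteq> carrier G" "\<forall>n\<in>N. x \<otimes> n \<otimes> inv x \<in> N"
    and c: "\<forall>y\<in>S. c y \<in> Qab \<and> c y \<noteq> 0" "\<forall>y\<in>S. \<forall>n\<in>N. c (n \<otimes> y) = c y" "c \<one> = 1"
    and P: "entries_in_Qab S P" "\<forall>y\<in>S. P y \<in> carrier_mat (dim_row (P \<one>)) (dim_row (P \<one>))"
    and \<mu>: "is_mu G S N P x \<sigma> \<mu>"
  shows "is_mu G S N (\<lambda>y. c y \<cdot>\<^sub>m P y) x \<sigma> (\<lambda>y. \<sigma> (c (x \<otimes> y \<otimes> inv x)) / c y * \<mu> y)"
proof -
  define d where "d = dim_row (P \<one>)"
  have \<mu>_nonzero: "\<forall>y\<in>S. \<mu> y \<noteq> 0" and \<mu>_one: "\<mu> \<one> = 1"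
    and \<mu>_coset: "\<forall>y\<in>S. \<forall>n\<in>N. \<mu> (n \<otimes> y) = \<mu> y"
    using \<mu> unfolding is_mu_def Let_def by auto
  obtain A Ai where A: "A \<in> carrier_mat d d" "Ai \<in> carrier_mat d d" "A * Ai = 1\<^sub>m d" "Ai * A = 1\<^sub>m d"
    and P_conj: "\<forall>y\<in>S. map_mat \<sigma> (P (x \<otimes> y \<otimes> inv x)) = \<mu> y \<cdot>\<^sub>m (Ai * P y * A)"
    using \<mu> unfolding is_mu_def Let_def d_def by auto
  have "c (x \<otimes> (n \<otimes> y) \<otimes> inv x) = c (x \<otimes> y \<otimes> inv x)" if "y \<in> S" "n \<in> N" for y n
  proof -
    have "y \<in> carrier G" "n \<in> carrier G" using S(1) N(1) that by blast+
    then have "x \<otimes> (n \<otimes> y) \<otimes> inv x = (x \<otimes> n \<otimes> inv x) \<otimes> (x \<otimes> y \<otimes> inv x)"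
      using x by (simp add: m_assoc)
    then show ?thesis using c(2) S N that by simp
  qed
  then have "\<forall>y\<in>S. \<forall>n\<in>N. \<sigma> (c (x \<otimes> (n \<otimes> y) \<otimes> inv x)) / c (n \<otimes> y) * \<mu> (n \<otimes> y)
      = \<sigma> (c (x \<otimes> y \<otimes> inv x)) / c y * \<mu> y"
    using c(2) \<mu>_coset by simp
  moreover have "\<forall>y\<in>S. \<sigma> (c (x \<otimes> y \<otimes> inv x)) / c y * \<mu> y \<noteq> 0"
    using c(1) \<mu>_nonzero S(3) Gal_Qab_nonzero[OF \<sigma>] by auto
  moreover have "\<sigma> (c (x \<otimes> \<one> \<otimes> inv x)) / c \<one> * \<mu> \<one> = 1"
    using x c(3) \<mu>_one Gal_Qab_one[OF \<sigma>] by simp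
  moreover have "map_mat \<sigma> (c (x \<otimes> y \<otimes> inv x) \<cdot>\<^sub>m P (x \<otimes> y \<otimes> inv x))
      = (\<sigma> (c (x \<otimes> y \<otimes> inv x)) / c y * \<mu> y) \<cdot>\<^sub>m (Ai * (c y \<cdot>\<^sub>m P y) * A)" if y: "y \<in> S" for y
  proof -
    have "P y \<in> carrier_mat d d" using P(2) y d_def by auto
    then have "Ai * (c y \<cdot>\<^sub>m P y) * A = c y \<cdot>\<^sub>m (Ai * P y * A)"
      using mult_smult_distrib[OF A(2)] mult_smult_assoc_mat[OF mult_carrier_mat[OF A(2)] A(1)] by simp
    moreover have "map_mat \<sigma> (c (x \<otimes> y \<otimes> inv x) \<cdot>\<^sub>m P (x \<otimes> y \<otimes> inv x))
        = \<sigma> (c (x \<otimes> y \<otimes> inv x)) \<cdot>\<^sub>m (\<mu> y \<cdot>\<^sub>m (Ai * P y * A))"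
      using map_mat_Gal_Qab_smult[OF \<sigma>] c(1) S(3) P(1) P_conj y unfolding entries_in_Qab_def by simp
    ultimately show ?thesis using c(1) y by (simp add: smult_smult_mat)
  qed
  ultimately show ?thesis using A unfolding is_mu_def Let_def d_def by auto
qed

lemma (in group) is_mu_smult_inverse:
  assumes \<sigma>: "\<sigma> \<in> Gal_Qab" and x: "x \<in> carrier G"
    and S: "S \<subseteq> carrier G" "\<one> \<in> S" "\<forall>y\<in>S. x \<otimes> y \<otimes> inv x \<in> S"
    and N: "N \<subseteq> carrier G" "\<forall>n\<in>N. x \<otimes> n \<otimes> inv x \<in> N"
    and c: "\<forall>y\<in>S. c y \<in> Qab \<and> c y \<noteq> 0" "\<forall>y\<in>S. \<forall>n\<in>N. c (n \<otimes> y) = c y" "c \<one> = 1"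
    and P: "entries_in_Qab S P" "\<forall>y\<in>S. P y \<in> carrier_mat (dim_row (P \<one>)) (dim_row (P \<one>))"
    and \<nu>: "is_mu G S N (\<lambda>y. c y \<cdot>\<^sub>m P y) x \<sigma> \<nu>"
  shows "is_mu G S N P x \<sigma> (\<lambda>y. \<sigma> (inverse (c (x \<otimes> y \<otimes> inv x))) / inverse (c y) * \<nu> y)"
proof -
  have "is_mu G S N (\<lambda>y. inverse (c y) \<cdot>\<^sub>m (c y \<cdot>\<^sub>m P y)) x \<sigma>
      (\<lambda>y. \<sigma> (inverse (c (x \<otimes> y \<otimes> inv x))) / inverse (c y) * \<nu> y)"
    using c P by (intro is_mu_smult[OF \<sigma> x S N _ _ _ _ _ \<nu>]) (auto intro: Qab_inverse entries_in_Qab_smult)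
  moreover have cancel: "\<forall>y\<in>S. inverse (c y) \<cdot>\<^sub>m (c y \<cdot>\<^sub>m P y) = P y"
    using c(1) by (simp add: smult_smult_mat)
  ultimately show ?thesis using is_mu_cong[OF S(2,3) cancel] by blast
qed

lemma ge_c_change_reps:
  assumes "ge_c G p N \<theta> H M \<phi> P P'"
    and "\<exists>d d' \<alpha> \<alpha>'.
      proj_rep G (stab G (carrier G) N \<theta>) d Q \<alpha> \<and> assoc_with G (stab G (carrier G) N \<theta>) N \<theta> d Q \<and>
      proj_rep G (stab G H M \<phi>) d' Q' \<alpha>' \<and> assoc_with G (stab G H M \<phi>) M \<phi> d' Q' \<and>
      entries_in_Qab (stab G (carrier G) N \<theta>) Q \<and> entries_in_Qab (stab G H M \<phi>) Q' \<and>
      (\<forall>x\<in>stab G (carrier G) N \<theta>. \<forall>y\<in>stab G (carrier G) N \<theta>. \<alpha> x y \<in> roots_of_unity) \<and>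
      (\<forall>x\<in>stab G H M \<phi>. \<forall>y\<in>stab G H M \<phi>. \<alpha>' x y \<in> roots_of_unity) \<and>
      (\<forall>x\<in>stab G H N \<theta>. \<forall>y\<in>stab G H N \<theta>. \<alpha> x y = \<alpha>' x y) \<and>
      (\<forall>c\<in>centralizer_of G N. \<exists>s. Q c = s \<cdot>\<^sub>m 1\<^sub>m d \<and> Q' c = s \<cdot>\<^sub>m 1\<^sub>m d')"
    and "\<forall>x \<sigma>. (x, \<sigma>) \<in> stab_pairs G H (Hcal p) N \<theta> \<longrightarrow>
      (\<exists>\<mu> \<mu>'. is_mu G (stab G (carrier G) N \<theta>) N Q x \<sigma> \<mu> \<and> is_mu G (stab G H M \<phi>) M Q' x \<sigma> \<mu>') \<and>
      (\<forall>\<mu> \<mu>'. is_mu G (stab G (carrier G) N \<theta>) N Q x \<sigma> \<mu> \<longrightarrow> is_mu G (stab G H M \<phi>) M Q' x \<sigma> \<mu>' \<longrightarrow>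
         (\<forall>y\<in>stab G H N \<theta>. \<mu> y = \<mu>' y))"
  shows "ge_c G p N \<theta> H M \<phi> Q Q'"
  using assms unfolding ge_c_def by (elim conjE) (intro conjI; assumption)

locale ge_c_twist = group +
  fixes p :: nat and N :: "'a set" and \<theta> :: "'a \<Rightarrow> complex"
    and H M :: "'a set" and \<phi> :: "'a \<Rightarrow> complex"
    and P P' :: "'a \<Rightarrow> complex mat" and \<epsilon> :: "'a \<Rightarrow> complex"
  assumes ge_c: "ge_c G p N \<theta> H M \<phi> P P'"
    and twist_root: "\<forall>x\<in>stab G (carrier G) N \<theta>. \<epsilon> x \<in> roots_of_unity"
    and twist_coset: "\<forall>x\<in>stab G (carrier G) N \<theta>. \<forall>n\<in>N. \<epsilon> (n \<otimes> x) = \<epsilon> x"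
    and twist_one: "\<epsilon> \<one> = 1"
begin

abbreviation "G\<^sub>\<theta> \<equiv> stab G (carrier G) N \<theta>"
abbreviation "H\<^sub>\<theta> \<equiv> stab G H N \<theta>"
abbreviation "H\<^sub>\<phi> \<equiv> stab G H M \<phi>"

lemma subgroup_N: "subgroup N G" and N_normal: "\<forall>g\<in>carrier G. \<forall>n\<in>N. g \<otimes> n \<otimes> inv g \<in> N"
proof -
  have "H_triple G p (carrier G) N \<theta>" using ge_c unfolding ge_c_def by blast
  then show "subgroup N G" "\<forall>g\<in>carrier G. \<forall>n\<in>N. g \<otimes> n \<otimes> inv g \<in> N"
    unfolding H_triple_def by blast+
qed

lemma subgroup_H: "subgroup H G" and subgroup_M: "subgroup M G"
  and M_normal_in_H: "\<forall>h\<in>H. \<forall>m\<in>M. h \<otimes> m \<otimes> inv h \<in> M"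
  using ge_c unfolding ge_c_def H_triple_def by blast+

lemma M_subset_N: "M \<subseteq> N"
  using ge_c unfolding ge_c_def by blast

lemma H_phi_eq_H_theta: "H\<^sub>\<phi> = H\<^sub>\<theta>"
proof -
  have "stab_pairs G H (Hcal p) N \<theta> = stab_pairs G H (Hcal p) M \<phi>"
    using ge_c unfolding ge_c_def by blast
  then have "(y, id) \<in> stab_pairs G H (Hcal p) M \<phi> \<longleftrightarrow> (y, id) \<in> stab_pairs G H (Hcal p) N \<theta>" for y
    by simp
  then show ?thesis unfolding stab_def stab_pairs_def using id_in_Hcal by auto
qed

lemma H_phi_subset_G_theta: "H\<^sub>\<phi> \<subseteq> G\<^sub>\<theta>"
  using H_phi_eq_H_theta subgroup.subset[OF subgroup_H] unfolding stab_def by auto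

lemma one_in_G_theta: "\<one> \<in> G\<^sub>\<theta>" and one_in_H_phi: "\<one> \<in> H\<^sub>\<phi>"
  using one_in_stab subgroup_self subgroup_H subgroup.subset[OF subgroup_N]
    subgroup.subset[OF subgroup_M] by blast+

lemma G_theta_mult_closed: "\<forall>x\<in>G\<^sub>\<theta>. \<forall>y\<in>G\<^sub>\<theta>. x \<otimes> y \<in> G\<^sub>\<theta>"
  using stab_mult_closed[OF subgroup_self subgroup.subset[OF subgroup_N] N_normal] by blast

lemma H_phi_mult_closed: "\<forall>x\<in>H\<^sub>\<phi>. \<forall>y\<in>H\<^sub>\<phi>. x \<otimes> y \<in> H\<^sub>\<phi>"
  using stab_mult_closed[OF subgroup_H subgroup.subset[OF subgroup_M] M_normal_in_H] by blast

lemma stab_pairs_conj_closed: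
  assumes "(x, \<sigma>) \<in> stab_pairs G H (Hcal p) N \<theta>"
  shows "\<forall>y\<in>G\<^sub>\<theta>. x \<otimes> y \<otimes> inv x \<in> G\<^sub>\<theta>" and "\<forall>y\<in>H\<^sub>\<phi>. x \<otimes> y \<otimes> inv x \<in> H\<^sub>\<phi>"
proof -
  have xH: "x \<in> H" and \<sigma>: "inj \<sigma>" and x_fix: "\<forall>n\<in>N. \<sigma> (\<theta> (x \<otimes> n \<otimes> inv x)) = \<theta> n"
    using assms Gal_Qab_inj unfolding stab_pairs_def Hcal_def by auto
  have x_fix': "\<forall>m\<in>M. \<sigma> (\<phi> (x \<otimes> m \<otimes> inv x)) = \<phi> m"
    using assms ge_c unfolding ge_c_def stab_pairs_def by auto
  have xG: "x \<in> carrier G" using xH subgroup.subset[OF subgroup_H] by blast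
  show "\<forall>y\<in>G\<^sub>\<theta>. x \<otimes> y \<otimes> inv x \<in> G\<^sub>\<theta>"
    using stab_conj_closed[OF subgroup_self _ N_normal xG \<sigma> x_fix] subgroup.subset[OF subgroup_N] by blast
  show "\<forall>y\<in>H\<^sub>\<phi>. x \<otimes> y \<otimes> inv x \<in> H\<^sub>\<phi>"
    using stab_conj_closed[OF subgroup_H _ M_normal_in_H xH \<sigma> x_fix']
      subgroup.subset[OF subgroup_M] by blast
qed

lemma entries_in_Qab_P: "entries_in_Qab G\<^sub>\<theta> P" and entries_in_Qab_P': "entries_in_Qab H\<^sub>\<phi> P'"
  using ge_c unfolding ge_c_def by blast+

lemma P_carrier: "\<forall>y\<in>G\<^sub>\<theta>. P y \<in> carrier_mat (dim_row (P \<one>)) (dim_row (P \<one>))"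
  and P'_carrier: "\<forall>y\<in>H\<^sub>\<phi>. P' y \<in> carrier_mat (dim_row (P' \<one>)) (dim_row (P' \<one>))"
proof -
  obtain d d' \<alpha> \<alpha>' where "proj_rep G G\<^sub>\<theta> d P \<alpha>" "proj_rep G H\<^sub>\<phi> d' P' \<alpha>'"
    using ge_c unfolding ge_c_def by blast
  then have "\<forall>y\<in>G\<^sub>\<theta>. P y \<in> carrier_mat d d" "\<forall>y\<in>H\<^sub>\<phi>. P' y \<in> carrier_mat d' d'"
    unfolding proj_rep_def by auto
  moreover from this have "dim_row (P \<one>) = d" "dim_row (P' \<one>) = d'"
    using one_in_G_theta one_in_H_phi by (auto dest!: bspec)
  ultimately show "\<forall>y\<in>G\<^sub>\<theta>. P y \<in> carrier_mat (dim_row (P \<one>)) (dim_row (P \<one>))"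
    "\<forall>y\<in>H\<^sub>\<phi>. P' y \<in> carrier_mat (dim_row (P' \<one>)) (dim_row (P' \<one>))"
    by simp_all
qed

lemma twist_nonzero: "\<forall>x\<in>G\<^sub>\<theta>. \<epsilon> x \<noteq> 0"
  using twist_root roots_of_unity_nonzero by blast

lemma twist_trivial_on_N: "n \<in> N \<Longrightarrow> \<epsilon> n = 1"
  using twist_coset one_in_G_theta twist_one subgroup.subset[OF subgroup_N] by force

lemma twist_right_coset:
  assumes "x \<in> G\<^sub>\<theta>" and "n \<in> N"
  shows "\<epsilon> (x \<otimes> n) = \<epsilon> x"
proof -
  have xG: "x \<in> carrier G" using assms(1) unfolding stab_def by blast
  then have "x \<otimes> n = (x \<otimes> n \<otimes> inv x) \<otimes> x"
    using assms(2) subgroup.subset[OF subgroup_N] by (auto simp: m_assoc)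
  then show ?thesis using twist_coset N_normal xG assms by metis
qed

lemma twist_coboundary_root:
  "x \<in> G\<^sub>\<theta> \<Longrightarrow> y \<in> G\<^sub>\<theta> \<Longrightarrow> \<epsilon> x * \<epsilon> y / \<epsilon> (x \<otimes> y) \<in> roots_of_unity"
  using twist_root G_theta_mult_closed
  by (simp add: divide_inverse roots_of_unity_mult roots_of_unity_inverse)

lemma twisted_factor_sets_and_associated:
  "\<exists>d d' \<alpha> \<alpha>'.
     proj_rep G G\<^sub>\<theta> d (\<lambda>x. \<epsilon> x \<cdot>\<^sub>m P x) \<alpha> \<and> assoc_with G G\<^sub>\<theta> N \<theta> d (\<lambda>x. \<epsilon> x \<cdot>\<^sub>m P x) \<and>
     proj_rep G H\<^sub>\<phi> d' (\<lambda>x. \<epsilon> x \<cdot>\<^sub>m P' x) \<alpha>' \<and> assoc_with G H\<^sub>\<phi> M \<phi> d' (\<lambda>x. \<epsilon> x \<cdot>\<^sub>m P' x) \<and>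
     entries_in_Qab G\<^sub>\<theta> (\<lambda>x. \<epsilon> x \<cdot>\<^sub>m P x) \<and> entries_in_Qab H\<^sub>\<phi> (\<lambda>x. \<epsilon> x \<cdot>\<^sub>m P' x) \<and>
     (\<forall>x\<in>G\<^sub>\<theta>. \<forall>y\<in>G\<^sub>\<theta>. \<alpha> x y \<in> roots_of_unity) \<and> (\<forall>x\<in>H\<^sub>\<phi>. \<forall>y\<in>H\<^sub>\<phi>. \<alpha>' x y \<in> roots_of_unity) \<and>
     (\<forall>x\<in>H\<^sub>\<theta>. \<forall>y\<in>H\<^sub>\<theta>. \<alpha> x y = \<alpha>' x y) \<and>
     (\<forall>c\<in>centralizer_of G N. \<exists>s. \<epsilon> c \<cdot>\<^sub>m P c = s \<cdot>\<^sub>m 1\<^sub>m d \<and> \<epsilon> c \<cdot>\<^sub>m P' c = s \<cdot>\<^sub>m 1\<^sub>m d')"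
proof -
  obtain d d' \<alpha> \<alpha>' where
    rep: "proj_rep G G\<^sub>\<theta> d P \<alpha>" "assoc_with G G\<^sub>\<theta> N \<theta> d P" and
    rep': "proj_rep G H\<^sub>\<phi> d' P' \<alpha>'" "assoc_with G H\<^sub>\<phi> M \<phi> d' P'" and
    roots: "\<forall>x\<in>G\<^sub>\<theta>. \<forall>y\<in>G\<^sub>\<theta>. \<alpha> x y \<in> roots_of_unity" "\<forall>x\<in>H\<^sub>\<phi>. \<forall>y\<in>H\<^sub>\<phi>. \<alpha>' x y \<in> roots_of_unity" and
    agree: "\<forall>x\<in>H\<^sub>\<theta>. \<forall>y\<in>H\<^sub>\<theta>. \<alpha> x y = \<alpha>' x y" and
    central: "\<forall>c\<in>centralizer_of G N. \<exists>s. P c = s \<cdot>\<^sub>m 1\<^sub>m d \<and> P' c = s \<cdot>\<^sub>m 1\<^sub>m d'"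
    using ge_c unfolding ge_c_def by blast
  show ?thesis
  proof (intro exI conjI)
    show "proj_rep G G\<^sub>\<theta> d (\<lambda>x. \<epsilon> x \<cdot>\<^sub>m P x) (\<lambda>x y. \<epsilon> x * \<epsilon> y / \<epsilon> (x \<otimes> y) * \<alpha> x y)"
      using proj_rep_smult[OF rep(1) twist_nonzero G_theta_mult_closed] .
    show "proj_rep G H\<^sub>\<phi> d' (\<lambda>x. \<epsilon> x \<cdot>\<^sub>m P' x) (\<lambda>x y. \<epsilon> x * \<epsilon> y / \<epsilon> (x \<otimes> y) * \<alpha>' x y)"
      using proj_rep_smult[OF rep'(1) _ H_phi_mult_closed] twist_nonzero H_phi_subset_G_theta by blast
    show "assoc_with G G\<^sub>\<theta> N \<theta> d (\<lambda>x. \<epsilon> x \<cdot>\<^sub>m P x)"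
      using rep subgroup.m_closed[OF subgroup_N] twist_trivial_on_N twist_one twist_coset twist_right_coset
      by (intro assoc_with_smult) (auto simp: proj_rep_def)
    show "assoc_with G H\<^sub>\<phi> M \<phi> d' (\<lambda>x. \<epsilon> x \<cdot>\<^sub>m P' x)"
      using rep' subgroup.m_closed[OF subgroup_M] twist_trivial_on_N twist_one M_subset_N
        twist_coset twist_right_coset H_phi_subset_G_theta
      by (intro assoc_with_smult) (auto simp: proj_rep_def subset_iff)
    show "entries_in_Qab G\<^sub>\<theta> (\<lambda>x. \<epsilon> x \<cdot>\<^sub>m P x)" "entries_in_Qab H\<^sub>\<phi> (\<lambda>x. \<epsilon> x \<cdot>\<^sub>m P' x)"
      using entries_in_Qab_P entries_in_Qab_P' twist_root roots_of_unity_subset_Qab H_phi_subset_G_theta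
      by (auto intro!: entries_in_Qab_smult)
    show "\<forall>x\<in>G\<^sub>\<theta>. \<forall>y\<in>G\<^sub>\<theta>. \<epsilon> x * \<epsilon> y / \<epsilon> (x \<otimes> y) * \<alpha> x y \<in> roots_of_unity"
      using twist_coboundary_root roots(1) by (blast intro: roots_of_unity_mult)
    show "\<forall>x\<in>H\<^sub>\<phi>. \<forall>y\<in>H\<^sub>\<phi>. \<epsilon> x * \<epsilon> y / \<epsilon> (x \<otimes> y) * \<alpha>' x y \<in> roots_of_unity"
      using twist_coboundary_root roots(2) H_phi_subset_G_theta by (blast intro: roots_of_unity_mult)
    show "\<forall>x\<in>H\<^sub>\<theta>. \<forall>y\<in>H\<^sub>\<theta>. \<epsilon> x * \<epsilon> y / \<epsilon> (x \<otimes> y) * \<alpha> x y = \<epsilon> x * \<epsilon> y / \<epsilon> (x \<otimes> y) * \<alpha>' x y"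
      using agree by simp
    show "\<forall>c\<in>centralizer_of G N. \<exists>s. \<epsilon> c \<cdot>\<^sub>m P c = s \<cdot>\<^sub>m 1\<^sub>m d \<and> \<epsilon> c \<cdot>\<^sub>m P' c = s \<cdot>\<^sub>m 1\<^sub>m d'"
      using central by (metis smult_smult_mat)
  qed
qed

lemma twist_is_mu:
  assumes x\<sigma>: "(x, \<sigma>) \<in> stab_pairs G H (Hcal p) N \<theta>"
    and S: "S \<subseteq> G\<^sub>\<theta>" "\<one> \<in> S" "\<forall>y\<in>S. x \<otimes> y \<otimes> inv x \<in> S"
    and K: "K \<subseteq> N" "\<forall>n\<in>K. x \<otimes> n \<otimes> inv x \<in> K"
    and Q: "entries_in_Qab S Q" "\<forall>y\<in>S. Q y \<in> carrier_mat (dim_row (Q \<one>)) (dim_row (Q \<one>))"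
  shows "is_mu G S K Q x \<sigma> \<mu> \<Longrightarrow>
      is_mu G S K (\<lambda>y. \<epsilon> y \<cdot>\<^sub>m Q y) x \<sigma> (\<lambda>y. \<sigma> (\<epsilon> (x \<otimes> y \<otimes> inv x)) / \<epsilon> y * \<mu> y)"
    and "is_mu G S K (\<lambda>y. \<epsilon> y \<cdot>\<^sub>m Q y) x \<sigma> \<nu> \<Longrightarrow>
      is_mu G S K Q x \<sigma> (\<lambda>y. \<sigma> (inverse (\<epsilon> (x \<otimes> y \<otimes> inv x))) / inverse (\<epsilon> y) * \<nu> y)"
proof -
  have \<sigma>: "\<sigma> \<in> Gal_Qab" and xG: "x \<in> carrier G"
    using x\<sigma> subgroup.subset[OF subgroup_H] unfolding stab_pairs_def Hcal_def by auto
  have SG: "S \<subseteq> carrier G" using S(1) unfolding stab_def by blast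
  have KG: "K \<subseteq> carrier G" using K(1) subgroup.subset[OF subgroup_N] by blast
  have twist: "\<forall>y\<in>S. \<epsilon> y \<in> Qab \<and> \<epsilon> y \<noteq> 0" "\<forall>y\<in>S. \<forall>n\<in>K. \<epsilon> (n \<otimes> y) = \<epsilon> y"
    using S(1) K(1) twist_root twist_coset roots_of_unity_subset_Qab roots_of_unity_nonzero by blast+
  show "is_mu G S K Q x \<sigma> \<mu> \<Longrightarrow>
      is_mu G S K (\<lambda>y. \<epsilon> y \<cdot>\<^sub>m Q y) x \<sigma> (\<lambda>y. \<sigma> (\<epsilon> (x \<otimes> y \<otimes> inv x)) / \<epsilon> y * \<mu> y)"
    by (rule is_mu_smult[OF \<sigma> xG SG S(2,3) KG K(2) twist twist_one Q])
  show "is_mu G S K (\<lambda>y. \<epsilon> y \<cdot>\<^sub>m Q y) x \<sigma> \<nu> \<Longrightarrow>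
      is_mu G S K Q x \<sigma> (\<lambda>y. \<sigma> (inverse (\<epsilon> (x \<otimes> y \<otimes> inv x))) / inverse (\<epsilon> y) * \<nu> y)"
    by (rule is_mu_smult_inverse[OF \<sigma> xG SG S(2,3) KG K(2) twist twist_one Q])
qed

lemma twisted_mu_agree:
  assumes x\<sigma>: "(x, \<sigma>) \<in> stab_pairs G H (Hcal p) N \<theta>"
  shows "(\<exists>\<mu> \<mu>'. is_mu G G\<^sub>\<theta> N (\<lambda>y. \<epsilon> y \<cdot>\<^sub>m P y) x \<sigma> \<mu> \<and> is_mu G H\<^sub>\<phi> M (\<lambda>y. \<epsilon> y \<cdot>\<^sub>m P' y) x \<sigma> \<mu>') \<and>
    (\<forall>\<mu> \<mu>'. is_mu G G\<^sub>\<theta> N (\<lambda>y. \<epsilon> y \<cdot>\<^sub>m P y) x \<sigma> \<mu> \<longrightarrow>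
       is_mu G H\<^sub>\<phi> M (\<lambda>y. \<epsilon> y \<cdot>\<^sub>m P' y) x \<sigma> \<mu>' \<longrightarrow> (\<forall>y\<in>H\<^sub>\<theta>. \<mu> y = \<mu>' y))"
proof -
  have \<sigma>: "\<sigma> \<in> Gal_Qab" and xG: "x \<in> carrier G" and xH: "x \<in> H"
    using x\<sigma> subgroup.subset[OF subgroup_H] unfolding stab_pairs_def Hcal_def by auto
  have N_conj: "\<forall>n\<in>N. x \<otimes> n \<otimes> inv x \<in> N" using N_normal xG by blast
  have M_conj: "\<forall>m\<in>M. x \<otimes> m \<otimes> inv x \<in> M" using M_normal_in_H xH by blast
  note twist_G = twist_is_mu[OF x\<sigma> order_refl one_in_G_theta stab_pairs_conj_closed(1)[OF x\<sigma>]
      order_refl N_conj entries_in_Qab_P P_carrier]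
  note twist_H = twist_is_mu[OF x\<sigma> H_phi_subset_G_theta one_in_H_phi stab_pairs_conj_closed(2)[OF x\<sigma>]
      M_subset_N M_conj entries_in_Qab_P' P'_carrier]
  have mu: "(\<exists>\<mu> \<mu>'. is_mu G G\<^sub>\<theta> N P x \<sigma> \<mu> \<and> is_mu G H\<^sub>\<phi> M P' x \<sigma> \<mu>') \<and>
    (\<forall>\<mu> \<mu>'. is_mu G G\<^sub>\<theta> N P x \<sigma> \<mu> \<longrightarrow> is_mu G H\<^sub>\<phi> M P' x \<sigma> \<mu>' \<longrightarrow> (\<forall>y\<in>H\<^sub>\<theta>. \<mu> y = \<mu>' y))"
    using ge_c x\<sigma> unfolding ge_c_def by blast
  show ?thesis
  proof (intro conjI allI impI ballI)
    show "\<exists>\<mu> \<mu>'. is_mu G G\<^sub>\<theta> N (\<lambda>y. \<epsilon> y \<cdot>\<^sub>m P y) x \<sigma> \<mu> \<and> is_mu G H\<^sub>\<phi> M (\<lambda>y. \<epsilon> y \<cdot>\<^sub>m P' y) x \<sigma> \<mu>'"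
      using mu twist_G(1) twist_H(1) by blast
  next
    fix \<nu> \<nu>' y
    assume \<nu>: "is_mu G G\<^sub>\<theta> N (\<lambda>y. \<epsilon> y \<cdot>\<^sub>m P y) x \<sigma> \<nu>"
      and \<nu>': "is_mu G H\<^sub>\<phi> M (\<lambda>y. \<epsilon> y \<cdot>\<^sub>m P' y) x \<sigma> \<nu>'" and y: "y \<in> H\<^sub>\<theta>"
    \<comment> \<open>Untwisting by the same factor c turns \<nu>, \<nu>' into \<mu>-functions of P, P', which agree on H_\<theta>.\<close>
    define c where "c = \<sigma> (inverse (\<epsilon> (x \<otimes> y \<otimes> inv x))) / inverse (\<epsilon> y)"
    have "c * \<nu> y = c * \<nu>' y" using mu twist_G(2)[OF \<nu>] twist_H(2)[OF \<nu>'] y unfolding c_def by blast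
    moreover have "y \<in> G\<^sub>\<theta>" "x \<otimes> y \<otimes> inv x \<in> G\<^sub>\<theta>"
      using y stab_pairs_conj_closed(1)[OF x\<sigma>] H_phi_eq_H_theta H_phi_subset_G_theta by auto
    then have "c \<noteq> 0" using twist_nonzero Gal_Qab_nonzero[OF \<sigma>] unfolding c_def by simp
    ultimately show "\<nu> y = \<nu>' y" by simp
  qed
qed

end

theorem lemma1p6:
  fixes G :: "('g, 'b) monoid_scheme" and p :: nat
    and N H M :: "'g set" and \<theta> \<phi> :: "'g \<Rightarrow> complex"
    and P P' :: "'g \<Rightarrow> complex mat" and \<epsilon> :: "'g \<Rightarrow> complex"
  assumes "prime p" and "group G" and "finite (carrier G)"
    and "ge_c G p N \<theta> H M \<phi> P P'"
    and "\<forall>x\<in>stab G (carrier G) N \<theta>. \<epsilon> x \<in> roots_of_unity"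
    and "\<forall>x\<in>stab G (carrier G) N \<theta>. \<forall>n\<in>N. \<epsilon> (n \<otimes>\<^bsub>G\<^esub> x) = \<epsilon> x"
    and "\<epsilon> \<one>\<^bsub>G\<^esub> = 1"
  shows "ge_c G p N \<theta> H M \<phi> (\<lambda>x. \<epsilon> x \<cdot>\<^sub>m P x) (\<lambda>x. \<epsilon> x \<cdot>\<^sub>m P' x)"
proof -
  interpret ge_c_twist G p N \<theta> H M \<phi> P P' \<epsilon>
    using assms(2,4-7) by (simp add: ge_c_twist_def ge_c_twist_axioms_def)
  show ?thesis
    by (rule ge_c_change_reps[OF ge_c twisted_factor_sets_and_associated]) (intro allI impI twisted_mu_agree)
qed

end
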